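(* Let $S^2_{\geq 0}=\{(x,y,z):x^2+y^2+z^2=1,\ z\geq 0\}$ and let $O=(0,0,0)$. If $A,B,C,D$ are four points on $S^2_{\geq 0}$ such that the sum $AB+AC+AD+BC+BD+CD$ of their pairwise Euclidean distances is maximal (among all quadruples of points of $S^2_{\geq 0}$), then $O$ is contained in the interior of the convex hull of $A,B,C,D$ or lies on one of its faces (surfaces). *)

theory Defs
  imports "HOL-Analysis.Analysis"
begin

definition upper_hemisphere :: "(real^3) set" where
  "upper_hemisphere = {p. (p$1)^2 + (p$2)^2 + (p$3)^2 = 1 \<and> p$3 \<ge> 0}"

definition pair_dist_sum :: "real^3 \<Rightarrow> real^3 \<Rightarrow> real^3 \<Rightarrow> real^3 \<Rightarrow> real" where
  "pair_dist_sum A B C D =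
     dist A B + dist A C + dist A D + dist B C + dist B D + dist C D"

end

theory Submission
  imports Defs
begin

text \<open>
  If 0 were not in the convex hull, all four points would lie in an open hemisphere
  \<open>{x. 0 < u \<bullet> x}\<close>. Inverting the unit sphere about the interior point \<open>X = c u\<close>
  (and then applying \<open>x \<mapsto> -x\<close>) maps the sphere to itself and multiplies the distance of
  \<open>P\<close> and \<open>Q\<close> by \<open>(1 - |X|\<^sup>2) / (|P - X| |Q - X|)\<close>, which exceeds 1 as soon as
  \<open>|X|\<^sup>2 < X \<bullet> P, X \<bullet> Q\<close>. For small \<open>c > 0\<close> this holds for all four points, whose images
  moreover stay in the closed hemisphere around \<open>u\<close>. A rotation taking \<open>u\<close> to the north
  pole then yields a quadruple on the upper hemisphere with a strictly larger distance sum.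
\<close>

lemma upper_hemisphere_iff: "P \<in> upper_hemisphere \<longleftrightarrow> norm P = 1 \<and> 0 \<le> P$3"
proof -
  have "P \<bullet> P = (P$1)^2 + (P$2)^2 + (P$3)^2"
    by (simp add: inner_vec_def sum_3 power2_eq_square)
  then show ?thesis
    unfolding upper_hemisphere_def norm_eq_1 by simp
qed

lemma norm_diff_inversions:
  fixes a b :: "'a::real_inner"
  assumes "a \<noteq> 0" "b \<noteq> 0"
  shows "norm (a /\<^sub>R (norm a)^2 - b /\<^sub>R (norm b)^2) = norm (a - b) / (norm a * norm b)"
proof -
  have "a \<bullet> a > 0" "b \<bullet> b > 0" using assms by auto
  then have "(norm (a /\<^sub>R (norm a)^2 - b /\<^sub>R (norm b)^2))^2 = (norm (a - b) / (norm a * norm b))^2"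
    by (simp add: power2_norm_eq_inner inner_diff_left inner_diff_right power_divide
        power_mult_distrib inner_commute field_simps)
  then show ?thesis
    by (simp add: power2_eq_iff_nonneg)
qed

text \<open>
  For \<open>|P| = 1\<close> this is the antipode of the second point where the line through \<open>P\<close>
  and \<open>X\<close> meets the unit sphere (by the power of the point \<open>X\<close>); in general it is the
  inversion in the sphere of radius \<open>sqrt (1 - |X|\<^sup>2)\<close> about \<open>X\<close>, followed by \<open>x \<mapsto> -x\<close>.
\<close>
definition sphere_inversion :: "'a::real_inner \<Rightarrow> 'a \<Rightarrow> 'a" where
  "sphere_inversion X P = - X + (1 - (norm X)^2) *\<^sub>R ((P - X) /\<^sub>R (norm (P - X))^2)"

lemma dist_sphere_inversion:
  fixes X P Q :: "'a::real_inner"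
  assumes "P \<noteq> X" "Q \<noteq> X"
  shows "dist (sphere_inversion X P) (sphere_inversion X Q) =
    \<bar>1 - (norm X)^2\<bar> * dist P Q / (norm (P - X) * norm (Q - X))"
proof -
  have "sphere_inversion X P - sphere_inversion X Q =
      (1 - (norm X)^2) *\<^sub>R ((P - X) /\<^sub>R (norm (P - X))^2 - (Q - X) /\<^sub>R (norm (Q - X))^2)"
    unfolding sphere_inversion_def by (simp add: algebra_simps)
  then show ?thesis
    using norm_diff_inversions[of "P - X" "Q - X"] assms by (simp add: dist_norm)
qed

lemma norm_sphere_inversion:
  fixes X P :: "'a::real_inner"
  assumes "norm P = 1" "P \<noteq> X"
  shows "norm (sphere_inversion X P) = 1"
proof -
  define s where "s = (P - X) \<bullet> (P - X)"
  define t where "t = (1 - X \<bullet> X) / s"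
  have s: "s > 0" using assms(2) s_def by auto
  have P_unit: "P \<bullet> P = 1" using assms(1) by (simp add: norm_eq_1)
  have power_of_X: "1 - X \<bullet> X - 2 * (X \<bullet> (P - X)) = s"
    using P_unit unfolding s_def by (simp add: inner_diff_left inner_diff_right inner_commute)
  have inv: "sphere_inversion X P = - X + t *\<^sub>R (P - X)"
    unfolding sphere_inversion_def t_def s_def by (simp add: power2_norm_eq_inner divide_inverse)
  have "(norm (sphere_inversion X P))^2 = X \<bullet> X - 2 * t * (X \<bullet> (P - X)) + t^2 * s"
    unfolding inv power2_norm_eq_inner s_def
    by (simp add: inner_add_left inner_add_right inner_commute power2_eq_square algebra_simps)
  also have "\<dots> = X \<bullet> X + (1 - X \<bullet> X) * (1 - X \<bullet> X - 2 * (X \<bullet> (P - X))) / s"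
    using s unfolding t_def by (simp add: field_simps power2_eq_square)
  also have "\<dots> = 1"
    using s by (simp add: power_of_X)
  finally have "(norm (sphere_inversion X P))^2 = 1" .
  then show ?thesis
    by (simp add: power2_eq_iff_nonneg[of _ 1, simplified])
qed

lemma sphere_inversion_expands:
  fixes X P Q :: "'a::real_inner"
  assumes "norm P = 1" "norm Q = 1" "X \<bullet> X < X \<bullet> P" "X \<bullet> X < X \<bullet> Q" "P \<noteq> Q"
  shows "dist P Q < dist (sphere_inversion X P) (sphere_inversion X Q)"
proof -
  define k where "k = 1 - (norm X)^2"
  define a where "a = norm (P - X)"
  define b where "b = norm (Q - X)"
  have a_sq: "a^2 = k - 2 * (X \<bullet> P - X \<bullet> X)" and b_sq: "b^2 = k - 2 * (X \<bullet> Q - X \<bullet> X)"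
    using assms(1,2) unfolding a_def b_def k_def power2_norm_eq_inner norm_eq_1
    by (simp_all add: inner_diff_left inner_diff_right inner_commute)
  have "P \<noteq> X" "Q \<noteq> X" using assms(3,4) by auto
  then have "a > 0" "b > 0" unfolding a_def b_def by auto
  moreover have "a^2 < k" "b^2 < k" using a_sq b_sq assms(3,4) by auto
  moreover have "0 < k"
    using \<open>a^2 < k\<close> by (meson le_less_trans zero_le_power2)
  ultimately have "(a * b)^2 < k^2"
    using mult_strict_mono[OF \<open>a^2 < k\<close> \<open>b^2 < k\<close> \<open>0 < k\<close> zero_le_power2[of b]]
    by (simp only: power_mult_distrib power2_eq_square[of k])
  then have "a * b < k"
    using \<open>0 < k\<close> by (simp add: power2_less_imp_less)
  with \<open>a > 0\<close> \<open>b > 0\<close> have "1 < k / (a * b)"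
    by simp
  moreover have "dist P Q > 0" using assms(5) by simp
  ultimately have "dist P Q < k / (a * b) * dist P Q"
    using mult_strict_right_mono[of 1 "k / (a * b)" "dist P Q"] by simp
  also have "\<dots> = dist (sphere_inversion X P) (sphere_inversion X Q)"
    using dist_sphere_inversion[OF \<open>P \<noteq> X\<close> \<open>Q \<noteq> X\<close>] \<open>0 < k\<close>
    unfolding a_def b_def k_def by simp
  finally show ?thesis .
qed

lemma sphere_inversion_inner_nonneg:
  fixes u P :: "'a::real_inner"
  assumes "norm u = 1" "norm P = 1" "0 < c" "2 * c \<le> u \<bullet> P"
  shows "0 \<le> sphere_inversion (c *\<^sub>R u) P \<bullet> u"
proof -
  define w where "w = u \<bullet> P"
  define s where "s = (norm (P - c *\<^sub>R u))^2"
  have u_unit: "u \<bullet> u = 1" using assms(1) by (simp add: norm_eq_1)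
  have s_eq: "s = 1 - 2 * c * w + c^2"
    using assms(2) u_unit unfolding s_def w_def power2_norm_eq_inner norm_eq_1
    by (simp add: inner_diff_left inner_diff_right inner_commute power2_eq_square algebra_simps)
  have "P \<noteq> c *\<^sub>R u"
    using assms(3,4) u_unit by auto
  then have "s > 0" unfolding s_def by simp
  have "sphere_inversion (c *\<^sub>R u) P \<bullet> u = - c + (1 - c^2) * (w - c) / s"
    using assms(1,3) u_unit unfolding sphere_inversion_def s_def[symmetric] w_def
    by (simp add: inner_add_left inner_diff_left inner_commute divide_inverse algebra_simps)
  also have "\<dots> = ((1 + c^2) * w - 2 * c) / s"
    using \<open>s > 0\<close> unfolding s_eq by (simp add: field_simps power2_eq_square)
  also have "\<dots> \<ge> 0"
  proof -
    have "0 \<le> c^2 * w"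
      using assms(3,4) unfolding w_def by simp
    then have "2 * c \<le> (1 + c^2) * w"
      using assms(4) unfolding w_def by (simp add: algebra_simps)
    then show ?thesis
      using \<open>s > 0\<close> by simp
  qed
  finally show ?thesis .
qed

lemma finite_set_in_open_halfspace:
  fixes S :: "'a::euclidean_space set"
  assumes "finite S" "0 \<notin> convex hull S"
  obtains u where "norm u = 1" "\<forall>x\<in>S. 0 < u \<bullet> x"
proof -
  have "closed (convex hull S)"
    using assms(1) by (intro compact_imp_closed finite_imp_compact_convex_hull)
  then obtain a b where "a \<noteq> 0" "0 < b" "\<forall>x\<in>convex hull S. b < a \<bullet> x"
    using separating_hyperplane_closed_0[OF convex_convex_hull _ assms(2)] by blast
  have "0 < (a /\<^sub>R norm a) \<bullet> x" if "x \<in> S" for x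
  proof -
    have "0 < a \<bullet> x"
      using \<open>0 < b\<close> \<open>\<forall>x\<in>convex hull S. b < a \<bullet> x\<close> hull_inc[OF that] by fastforce
    then show ?thesis
      using \<open>a \<noteq> 0\<close> by simp
  qed
  with \<open>a \<noteq> 0\<close> show thesis
    by (intro that[of "a /\<^sub>R norm a"]) auto
qed

lemma expanding_map_into_upper_hemisphere:
  fixes S :: "(real^3) set" and u :: "real^3"
  assumes "finite S" "norm u = 1" "\<forall>x\<in>S. norm x = 1" "\<forall>x\<in>S. 0 < u \<bullet> x"
  obtains F where "\<forall>x\<in>S. F x \<in> upper_hemisphere"
    "\<forall>x\<in>S. \<forall>y\<in>S. x \<noteq> y \<longrightarrow> dist x y < dist (F x) (F y)"
proof (cases "S = {}")
  case True
  then show thesis by (intro that) auto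
next
  case False
  define c where "c = Min ((\<lambda>x. u \<bullet> x) ` S) / 2"
  define X where "X = c *\<^sub>R u"
  have "0 < c" "\<forall>x\<in>S. 2 * c \<le> u \<bullet> x"
    using assms(1,4) False unfolding c_def by auto
  have u_unit: "u \<bullet> u = 1" using assms(2) by (simp add: norm_eq_1)
  have near_u: "X \<bullet> X < X \<bullet> x" if "x \<in> S" for x
  proof -
    have "c < u \<bullet> x"
      using \<open>0 < c\<close> \<open>\<forall>x\<in>S. 2 * c \<le> u \<bullet> x\<close> that by fastforce
    then have "c * c < c * (u \<bullet> x)"
      using \<open>0 < c\<close> by (rule mult_strict_left_mono)
    then show ?thesis
      unfolding X_def by (simp add: u_unit)
  qed
  obtain f :: "real^3 \<Rightarrow> real^3" where f: "orthogonal_transformation f" "f u = axis 3 1"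
    using orthogonal_transformation_exists_1[OF assms(2), of "axis 3 1"] by auto
  define F where "F = f \<circ> sphere_inversion X"
  have "F x \<in> upper_hemisphere" if "x \<in> S" for x
  proof -
    have "x \<noteq> X" using near_u[OF that] by auto
    then have "norm (F x) = 1"
      using assms(3) that f(1) unfolding F_def
      by (simp add: orthogonal_transformation_norm norm_sphere_inversion)
    moreover have "F x $ 3 = sphere_inversion X x \<bullet> u"
      using f unfolding F_def orthogonal_transformation_def
      by (metis comp_apply inner_axis mult.right_neutral real_inner_1_right)
    moreover have "sphere_inversion X x \<bullet> u \<ge> 0"
      using sphere_inversion_inner_nonneg assms(2,3) \<open>0 < c\<close> \<open>\<forall>x\<in>S. 2 * c \<le> u \<bullet> x\<close> that
      unfolding X_def by blast
    ultimately show ?thesis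
      by (simp add: upper_hemisphere_iff)
  qed
  moreover have "dist x y < dist (F x) (F y)" if "x \<in> S" "y \<in> S" "x \<noteq> y" for x y
    using sphere_inversion_expands[OF _ _ near_u near_u] assms(3) that f(1)
    unfolding F_def orthogonal_transformation_isometry by simp
  ultimately show thesis
    by (intro that) auto
qed

lemma pair_dist_sum_strict_mono:
  assumes "\<forall>x\<in>{A, B, C, D}. \<forall>y\<in>{A, B, C, D}. x \<noteq> y \<longrightarrow> dist x y < dist (F x) (F y)"
    and "\<not> (A = B \<and> A = C \<and> A = D)"
  shows "pair_dist_sum A B C D < pair_dist_sum (F A) (F B) (F C) (F D)"
proof -
  have le: "dist x y \<le> dist (F x) (F y)" if "x \<in> {A, B, C, D}" "y \<in> {A, B, C, D}" for x y
    using assms(1) that by (cases "x = y") (simp, meson less_imp_le)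
  have "A \<noteq> B \<or> A \<noteq> C \<or> A \<noteq> D" using assms(2) by blast
  then show ?thesis
    unfolding pair_dist_sum_def
    using assms(1) le[of A B] le[of A C] le[of A D] le[of B C] le[of B D] le[of C D]
    by (elim disjE) (simp_all add: add_less_le_mono add_le_less_mono)
qed

lemma upper_hemisphere_pair_dist_sum_pos:
  "\<exists>A B C D. A \<in> upper_hemisphere \<and> B \<in> upper_hemisphere \<and> C \<in> upper_hemisphere \<and>
    D \<in> upper_hemisphere \<and> 0 < pair_dist_sum A B C D"
proof -
  have "axis 3 1 \<in> upper_hemisphere" "axis 1 1 \<in> upper_hemisphere"
    by (simp_all add: upper_hemisphere_iff) (simp add: axis_def)
  moreover have "axis 3 1 \<noteq> (axis 1 1 :: real^3)"
    by (simp add: axis_eq_axis)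
  then have "0 < pair_dist_sum (axis 3 1) (axis 1 1) (axis 1 1) (axis 1 1 :: real^3)"
    by (simp add: pair_dist_sum_def)
  ultimately show ?thesis
    by blast
qed

theorem lemma1:
  fixes A B C D :: "real^3"
  assumes "A \<in> upper_hemisphere" "B \<in> upper_hemisphere"
          "C \<in> upper_hemisphere" "D \<in> upper_hemisphere"
  assumes max: "\<And>A' B' C' D'. A' \<in> upper_hemisphere \<Longrightarrow> B' \<in> upper_hemisphere \<Longrightarrow>
          C' \<in> upper_hemisphere \<Longrightarrow> D' \<in> upper_hemisphere \<Longrightarrow>
          pair_dist_sum A' B' C' D' \<le> pair_dist_sum A B C D"
  shows "0 \<in> interior (convex hull {A, B, C, D}) \<or> 0 \<in> frontier (convex hull {A, B, C, D})"
proof -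
  let ?S = "{A, B, C, D}"
  have "0 \<in> convex hull ?S"
  proof (rule ccontr)
    assume "0 \<notin> convex hull ?S"
    then obtain u where "norm u = 1" "\<forall>x\<in>?S. 0 < u \<bullet> x"
      using finite_set_in_open_halfspace[of ?S] by auto
    moreover have "\<forall>x\<in>?S. norm x = 1"
      using assms(1-4) by (simp add: upper_hemisphere_iff)
    ultimately obtain F where F: "\<forall>x\<in>?S. F x \<in> upper_hemisphere"
      "\<forall>x\<in>?S. \<forall>y\<in>?S. x \<noteq> y \<longrightarrow> dist x y < dist (F x) (F y)"
      using expanding_map_into_upper_hemisphere[of ?S u] by auto
    have "\<not> (A = B \<and> A = C \<and> A = D)"
      using upper_hemisphere_pair_dist_sum_pos max by (fastforce simp: pair_dist_sum_def)
    then have "pair_dist_sum A B C D < pair_dist_sum (F A) (F B) (F C) (F D)"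
      using F(2) by (rule pair_dist_sum_strict_mono[rotated])
    with F(1) max[of "F A" "F B" "F C" "F D"] show False
      by simp
  qed
  moreover have "closed (convex hull ?S)"
    by (intro compact_imp_closed finite_imp_compact_convex_hull) simp
  ultimately show ?thesis
    by (auto simp: frontier_def closure_closed)
qed

end
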